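(* The gauge-invariant subregion algebra satisfies $$\widetilde{\mathcal A}_r:=\Pi_{GI}\mathcal A_r\Pi_{GI}=\hat{\mathcal A}_r^\Pi\,\Pi_{GI}=\{\hat{\mathcal O}\Pi_{GI}:\hat{\mathcal O}\in\hat{\mathcal A}_r,\ [\hat{\mathcal O},\Pi_{GI}]=0\}.$$
   Context: Setup. Let $G$ be a compact Lie group (possibly finite) with normalized Haar measure $dg$ ($\int dg=1$). Let $\Lambda=(V,E)$ be a finite directed graph; loops and multiple edges are allowed. Each edge $e$ carries $\mathcal H_e=L^2(G)$ with unitaries $L_e(g)|h\rangle_e=|gh\rangle_e$ and $R_e(g^{-1})|h\rangle_e=|hg^{-1}\rangle_e$. Each vertex $v$ carries a Hilbert space $\mathcal H_v$ with a unitary representation $U_v$ of $G$. All these spaces are taken finite-dimensional by truncating to finitely many irreducible isotypic sectors, which are invariant under the group actions. The pre-gauged space is $\mathcal H=\bigotimes_v\mathcal H_v\otimes\bigotimes_e\mathcal H_e$. The gauge transformation at $v$ is $A_v(g)=U_v(g)\prod_{e\in E^-(v)}L_e(g)\prod_{e\in E^+(v)}R_e(g^{-1})$, where $E^-(v)$ is the set of edges oriented out of $v$ and $E^+(v)$ the set of edges oriented into $v$. Set $\Pi_v=\int dg\,A_v(g)$; these are mutually commuting orthogonal projections. Set $\Pi_{GI}=\prod_v\Pi_v$. Subregions. A subregion $r$ is an arbitrary subset of $V\cup E$, and $\bar r$ is its complement. Let $\mathcal H_r=\bigotimes_{x\in r}\mathcal H_x$ and $\mathcal A_r=\mathcal B(\mathcal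 H_r)\otimes 1_{\bar r}$. Let $V_r$ be the set of vertices $v$ such that $v$ and all edges incident to $v$ lie in $r$, and put $\Pi_{V_r}=\prod_{v\in V_r}\Pi_v$. Define $\hat{\mathcal A}_r=\{\Pi_{V_r}\mathcal O\Pi_{V_r}:\mathcal O\in\mathcal A_r\}$. *)

theory Defs
  imports "HOL-Probability.Probability" "HOL-Algebra.Group" "Graph_Theory.Digraph"
begin

text \<open>Finite-dimensional Hilbert spaces and their tensor products are modelled in
  coordinates. A site x (a vertex or an edge) carries C^(d x) with standard basis
  indexed by 0..<d x. The tensor product over a set S of sites has the orthonormal
  basis of configurations (PiE S (lessThan o d)); operators are matrices indexed by
  configurations, extended by zero outside.\<close>

type_synonym 'x cfg = "'x \<Rightarrow> nat"
type_synonym 'x op = "'x cfg \<Rightarrow> 'x cfg \<Rightarrow> complex"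
type_synonym cmat = "nat \<Rightarrow> nat \<Rightarrow> complex"

definition cfgs :: "('x \<Rightarrow> nat) \<Rightarrow> 'x set \<Rightarrow> 'x cfg set" where
  "cfgs d S = (\<Pi>\<^sub>E x\<in>S. {..<d x})"

definition opmul :: "'x cfg set \<Rightarrow> 'x op \<Rightarrow> 'x op \<Rightarrow> 'x op" where
  "opmul C A B = (\<lambda>\<sigma> \<tau>. if \<sigma> \<in> C \<and> \<tau> \<in> C then (\<Sum>\<rho>\<in>C. A \<sigma> \<rho> * B \<rho> \<tau>) else 0)"

definition opid :: "'x cfg set \<Rightarrow> 'x op" where
  "opid C = (\<lambda>\<sigma> \<tau>. if \<sigma> \<in> C \<and> \<sigma> = \<tau> then 1 else 0)"

text \<open>Ordered product of a finite family of operators (used for commuting families).\<close>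
definition opprod :: "'x cfg set \<Rightarrow> ('i \<Rightarrow> 'x op) \<Rightarrow> 'i set \<Rightarrow> 'x op" where
  "opprod C P I = Finite_Set.fold (\<lambda>i acc. opmul C (P i) acc) (opid C) I"

definition matmul :: "nat \<Rightarrow> cmat \<Rightarrow> cmat \<Rightarrow> cmat" where
  "matmul n A B = (\<lambda>i j. \<Sum>k<n. A i k * B k j)"

definition idm :: cmat where
  "idm = (\<lambda>i j. if i = j then 1 else 0)"

definition unitary_rep :: "('g, 'b) monoid_scheme \<Rightarrow> nat \<Rightarrow> ('g \<Rightarrow> cmat) \<Rightarrow> bool" where
  "unitary_rep G n \<rho> \<longleftrightarrow>
     (\<forall>g\<in>carrier G. \<forall>i<n. \<forall>j<n. (\<Sum>k<n. \<rho> g i k * cnj (\<rho> g j k)) = idm i j) \<and>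
     (\<forall>g\<in>carrier G. \<forall>h\<in>carrier G. \<forall>i<n. \<forall>j<n.
        \<rho> (g \<otimes>\<^bsub>G\<^esub> h) i j = matmul n (\<rho> g) (\<rho> h) i j)"

definition sites :: "('v, 'e) pre_digraph \<Rightarrow> ('v + 'e) set" where
  "sites \<Lambda> = Inl ` verts \<Lambda> \<union> Inr ` arcs \<Lambda>"

definition prod_op :: "'x set \<Rightarrow> ('x \<Rightarrow> nat) \<Rightarrow> ('x \<Rightarrow> cmat) \<Rightarrow> 'x op" where
  "prod_op S d u = (\<lambda>\<sigma> \<tau>. if \<sigma> \<in> cfgs d S \<and> \<tau> \<in> cfgs d S
                             then (\<Prod>x\<in>S. u x (\<sigma> x) (\<tau> x)) else 0)"

text \<open>Site factors of the gauge transformation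
  A_v(g) = U_v(g) prod_{e out of v} L_e(g) prod_{e into v} R_e(g^-1).\<close>
definition gauge_site ::
  "('v, 'e) pre_digraph \<Rightarrow> ('g, 'b) monoid_scheme \<Rightarrow> ('v + 'e \<Rightarrow> nat) \<Rightarrow>
   ('v \<Rightarrow> 'g \<Rightarrow> cmat) \<Rightarrow> ('e \<Rightarrow> 'g \<Rightarrow> cmat) \<Rightarrow> ('e \<Rightarrow> 'g \<Rightarrow> cmat) \<Rightarrow>
   'v \<Rightarrow> 'g \<Rightarrow> 'v + 'e \<Rightarrow> cmat" where
  "gauge_site \<Lambda> G d U L R v g x = (case x of
       Inl w \<Rightarrow> (if w = v then U w g else idm)
     | Inr e \<Rightarrow> matmul (d (Inr e))
                  (if tail \<Lambda> e = v then L e g else idm)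
                  (if head \<Lambda> e = v then R e (inv\<^bsub>G\<^esub> g) else idm))"

definition gauge_op ::
  "('v, 'e) pre_digraph \<Rightarrow> ('g, 'b) monoid_scheme \<Rightarrow> ('v + 'e \<Rightarrow> nat) \<Rightarrow>
   ('v \<Rightarrow> 'g \<Rightarrow> cmat) \<Rightarrow> ('e \<Rightarrow> 'g \<Rightarrow> cmat) \<Rightarrow> ('e \<Rightarrow> 'g \<Rightarrow> cmat) \<Rightarrow>
   'v \<Rightarrow> 'g \<Rightarrow> ('v + 'e) op" where
  "gauge_op \<Lambda> G d U L R v g = prod_op (sites \<Lambda>) d (gauge_site \<Lambda> G d U L R v g)"

text \<open>Pi_v = integral of A_v(g) against the normalized Haar measure M.\<close>
definition Pi_v ::
  "('v, 'e) pre_digraph \<Rightarrow> ('g, 'b) monoid_scheme \<Rightarrow> 'g measure \<Rightarrow> ('v + 'e \<Rightarrow> nat) \<Rightarrow>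
   ('v \<Rightarrow> 'g \<Rightarrow> cmat) \<Rightarrow> ('e \<Rightarrow> 'g \<Rightarrow> cmat) \<Rightarrow> ('e \<Rightarrow> 'g \<Rightarrow> cmat) \<Rightarrow>
   'v \<Rightarrow> ('v + 'e) op" where
  "Pi_v \<Lambda> G M d U L R v = (\<lambda>\<sigma> \<tau>. LINT g|M. gauge_op \<Lambda> G d U L R v g \<sigma> \<tau>)"

definition Pi_set ::
  "('v, 'e) pre_digraph \<Rightarrow> ('g, 'b) monoid_scheme \<Rightarrow> 'g measure \<Rightarrow> ('v + 'e \<Rightarrow> nat) \<Rightarrow>
   ('v \<Rightarrow> 'g \<Rightarrow> cmat) \<Rightarrow> ('e \<Rightarrow> 'g \<Rightarrow> cmat) \<Rightarrow> ('e \<Rightarrow> 'g \<Rightarrow> cmat) \<Rightarrow>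
   'v set \<Rightarrow> ('v + 'e) op" where
  "Pi_set \<Lambda> G M d U L R W = opprod (cfgs d (sites \<Lambda>)) (Pi_v \<Lambda> G M d U L R) W"

text \<open>Subregion algebra A_r = B(H_r) tensor 1 on H, S the set of all sites.\<close>
definition sub_alg :: "('x \<Rightarrow> nat) \<Rightarrow> 'x set \<Rightarrow> 'x set \<Rightarrow> 'x op set" where
  "sub_alg d S r = {(\<lambda>\<sigma> \<tau>. if \<sigma> \<in> cfgs d S \<and> \<tau> \<in> cfgs d S
        then Or (restrict \<sigma> r) (restrict \<tau> r) *
             (if restrict \<sigma> (S - r) = restrict \<tau> (S - r) then 1 else 0)
        else 0) | Or :: 'x op. True}"

definition interior_verts :: "('v, 'e) pre_digraph \<Rightarrow> ('v + 'e) set \<Rightarrow> 'v set" where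
  "interior_verts \<Lambda> r = {v \<in> verts \<Lambda>. Inl v \<in> r \<and>
      (\<forall>e\<in>arcs \<Lambda>. (tail \<Lambda> e = v \<or> head \<Lambda> e = v) \<longrightarrow> Inr e \<in> r)}"

end

theory Submission
  imports Defs
begin

text \<open>All the projections Pi_v are Haar averages of commuting representations, hence commuting
  projections, and Pi_GI = Q R with Q the product over V_r and R the product over the remaining
  vertices. A gauge transformation A_w(g) is a tensor product of site unitaries, so conjugating
  an operator localized in r by it keeps it localized in r; hence the twirl
  X \<mapsto> \<integral> A_w(g) X A_w(g)^* dg maps A_r into itself, and by invariance of the Haar measure
  its value commutes with Pi_w and has the same compression by Pi_w as X. Twirling over all
  vertices outside V_r replaces X \<in> A_r by some Y \<in> A_r commuting with R and with R Y R = R X R,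
  so Pi_GI X Pi_GI = (Q Y Q) Pi_GI, where Q Y Q commutes with Pi_GI. Conversely, if Q X Q commutes
  with Pi_GI then (Q X Q) Pi_GI = Pi_GI (Q X Q) Pi_GI = Pi_GI X Pi_GI.\<close>

section \<open>Compressions by commuting idempotents\<close>

context semigroup
begin

lemma commute_mult:
  assumes "a \<^bold>* b = b \<^bold>* a" and "a \<^bold>* c = c \<^bold>* a"
  shows "a \<^bold>* (b \<^bold>* c) = b \<^bold>* c \<^bold>* a"
  by (metis assms assoc)

lemma idem_mult:
  assumes "a \<^bold>* a = a" and "b \<^bold>* b = b" and "a \<^bold>* b = b \<^bold>* a"
  shows "a \<^bold>* b \<^bold>* (a \<^bold>* b) = a \<^bold>* b"
  by (metis assms assoc)

lemma sandwich_mult: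
  assumes "b \<^bold>* a = a \<^bold>* b" and "a \<^bold>* y \<^bold>* a = a \<^bold>* y' \<^bold>* a"
    and "b \<^bold>* y' \<^bold>* b = b \<^bold>* x \<^bold>* b"
  shows "a \<^bold>* b \<^bold>* y \<^bold>* (a \<^bold>* b) = a \<^bold>* b \<^bold>* x \<^bold>* (a \<^bold>* b)"
proof -
  have "a \<^bold>* b \<^bold>* y \<^bold>* (a \<^bold>* b) = b \<^bold>* (a \<^bold>* y \<^bold>* a) \<^bold>* b"
    by (metis assms(1) assoc)
  also have "\<dots> = a \<^bold>* (b \<^bold>* y' \<^bold>* b) \<^bold>* a"
    by (metis assms(1,2) assoc)
  also have "\<dots> = a \<^bold>* b \<^bold>* x \<^bold>* (a \<^bold>* b)"
    by (metis assms(1,3) assoc)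
  finally show ?thesis .
qed

lemma compression_eq_commuting_corner:
  assumes qq: "q \<^bold>* q = q" and ss: "s \<^bold>* s = s" and sq: "s \<^bold>* q = q \<^bold>* s"
    and twirl: "\<forall>x\<in>A. \<exists>y\<in>A. s \<^bold>* y = y \<^bold>* s \<and> s \<^bold>* y \<^bold>* s = s \<^bold>* x \<^bold>* s"
  shows "{q \<^bold>* s \<^bold>* x \<^bold>* (q \<^bold>* s) | x. x \<in> A} =
    {h \<^bold>* (q \<^bold>* s) | h. h \<in> {q \<^bold>* x \<^bold>* q | x. x \<in> A} \<and> h \<^bold>* (q \<^bold>* s) = q \<^bold>* s \<^bold>* h}"
    (is "?L = ?R")
proof
  show "?L \<subseteq> ?R"
  proof
    fix z assume "z \<in> ?L"
    then obtain x where x: "x \<in> A" and z: "z = q \<^bold>* s \<^bold>* x \<^bold>* (q \<^bold>* s)" by blast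
    then obtain y where y: "y \<in> A" and ys: "s \<^bold>* y = y \<^bold>* s"
      and sys: "s \<^bold>* y \<^bold>* s = s \<^bold>* x \<^bold>* s"
      using twirl by blast
    have "z = q \<^bold>* y \<^bold>* q \<^bold>* (q \<^bold>* s)"
      by (metis z sys ys qq ss sq assoc)
    moreover have "q \<^bold>* y \<^bold>* q \<^bold>* (q \<^bold>* s) = q \<^bold>* s \<^bold>* (q \<^bold>* y \<^bold>* q)"
      by (metis ys qq sq assoc)
    ultimately show "z \<in> ?R" using y by blast
  qed
next
  show "?R \<subseteq> ?L"
  proof
    fix z assume "z \<in> ?R"
    then obtain x where x: "x \<in> A" and z: "z = q \<^bold>* x \<^bold>* q \<^bold>* (q \<^bold>* s)"
      and comm: "q \<^bold>* x \<^bold>* q \<^bold>* (q \<^bold>* s) = q \<^bold>* s \<^bold>* (q \<^bold>* x \<^bold>* q)"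
      by blast
    have "z = q \<^bold>* s \<^bold>* (q \<^bold>* x \<^bold>* q) \<^bold>* (q \<^bold>* s)"
      using idem_mult[OF qq ss sq[symmetric]] by (metis z comm assoc)
    also have "\<dots> = q \<^bold>* s \<^bold>* x \<^bold>* (q \<^bold>* s)"
      by (metis qq sq assoc)
    finally show "z \<in> ?L" using x by blast
  qed
qed

end

section \<open>Operators on a finite configuration space\<close>

definition supported :: "'x cfg set \<Rightarrow> 'x op \<Rightarrow> bool" where
  "supported C A \<longleftrightarrow> (\<forall>\<sigma> \<tau>. \<sigma> \<notin> C \<or> \<tau> \<notin> C \<longrightarrow> A \<sigma> \<tau> = 0)"

lemma supported_opmul [simp]: "supported C (opmul C A B)"
  by (simp add: supported_def opmul_def)

lemma supported_opid [simp]: "supported C (opid C)"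
  by (simp add: supported_def opid_def)

lemma opmul_assoc: "opmul C (opmul C A B) D = opmul C A (opmul C B D)"
proof (intro ext)
  fix \<sigma> \<tau>
  show "opmul C (opmul C A B) D \<sigma> \<tau> = opmul C A (opmul C B D) \<sigma> \<tau>"
  proof (cases "\<sigma> \<in> C \<and> \<tau> \<in> C")
    case True
    have "opmul C (opmul C A B) D \<sigma> \<tau> = (\<Sum>\<rho>\<in>C. \<Sum>\<rho>'\<in>C. A \<sigma> \<rho>' * B \<rho>' \<rho> * D \<rho> \<tau>)"
      using True by (auto simp: opmul_def sum_distrib_right intro!: sum.cong)
    also have "\<dots> = (\<Sum>\<rho>'\<in>C. A \<sigma> \<rho>' * (\<Sum>\<rho>\<in>C. B \<rho>' \<rho> * D \<rho> \<tau>))"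
      by (subst sum.swap) (simp add: sum_distrib_left mult.assoc)
    also have "\<dots> = opmul C A (opmul C B D) \<sigma> \<tau>"
      using True by (auto simp: opmul_def intro!: sum.cong)
    finally show ?thesis .
  qed (auto simp: opmul_def)
qed

interpretation opmul: semigroup "opmul C" for C
  by unfold_locales (rule opmul_assoc)

lemma opmul_opid_left: "finite C \<Longrightarrow> supported C A \<Longrightarrow> opmul C (opid C) A = A"
  by (auto simp: opmul_def opid_def supported_def if_distrib[of "\<lambda>x. x * _"] cong: if_cong intro!: ext)

lemma opmul_opid_right: "finite C \<Longrightarrow> supported C A \<Longrightarrow> opmul C A (opid C) = A"
  by (auto simp: opmul_def opid_def supported_def if_distrib[of "\<lambda>x. _ * x"] cong: if_cong intro!: ext)

abbreviation commuting :: "'x cfg set \<Rightarrow> ('i \<Rightarrow> 'x op) \<Rightarrow> 'i set \<Rightarrow> bool" where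
  "commuting C P I \<equiv> pairwise (\<lambda>i j. opmul C (P i) (P j) = opmul C (P j) (P i)) I"

lemma opprod_empty [simp]: "opprod C P {} = opid C"
  by (simp add: opprod_def)

lemma opprod_insert:
  assumes "finite I" and "i \<notin> I" and comm: "commuting C P (insert i I)"
  shows "opprod C P (insert i I) = opmul C (P i) (opprod C P I)"
proof -
  have "comp_fun_commute_on (insert i I) (\<lambda>i. opmul C (P i))"
  proof
    fix x y assume "x \<in> insert i I" "y \<in> insert i I"
    then have "opmul C (P y) (P x) = opmul C (P x) (P y)"
      using comm unfolding pairwise_def by (cases "x = y") (simp, metis)
    then show "opmul C (P y) \<circ> opmul C (P x) = opmul C (P x) \<circ> opmul C (P y)"
      unfolding comp_def by (simp only: opmul_assoc[symmetric])
  qed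
  then show ?thesis
    unfolding opprod_def using assms(1,2) by (rule comp_fun_commute_on.fold_insert[OF _ subset_refl])
qed

lemma supported_opprod: "finite I \<Longrightarrow> commuting C P I \<Longrightarrow> supported C (opprod C P I)"
proof (induction I rule: finite_induct)
  case (insert i I)
  then show ?case by (simp only: opprod_insert[OF insert.hyps insert.prems] supported_opmul)
qed simp

lemma opprod_commute:
  assumes "finite C" and "supported C B"
  shows "finite I \<Longrightarrow> commuting C P I \<Longrightarrow> (\<forall>i\<in>I. opmul C B (P i) = opmul C (P i) B) \<Longrightarrow>
    opmul C B (opprod C P I) = opmul C (opprod C P I) B"
proof (induction I rule: finite_induct)
  case empty
  then show ?case using assms by (simp add: opmul_opid_left opmul_opid_right)
next
  case (insert i I)
  have "commuting C P I"
    using insert.prems(1) by (rule pairwise_subset) blast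
  with insert have "opmul C B (opmul C (P i) (opprod C P I)) = opmul C (opmul C (P i) (opprod C P I)) B"
    by (intro opmul.commute_mult) auto
  then show ?case
    by (simp only: opprod_insert[OF insert.hyps insert.prems(1)])
qed

lemma opprod_idem:
  assumes "finite C"
  shows "finite I \<Longrightarrow> commuting C P I \<Longrightarrow> \<forall>i\<in>I. supported C (P i) \<and> opmul C (P i) (P i) = P i \<Longrightarrow>
    opmul C (opprod C P I) (opprod C P I) = opprod C P I"
proof (induction I rule: finite_induct)
  case empty
  then show ?case using assms by (simp add: opmul_opid_left)
next
  case (insert i I)
  have comm: "commuting C P I"
    using insert.prems(1) by (rule pairwise_subset) blast
  have "opmul C (P i) (opprod C P I) = opmul C (opprod C P I) (P i)"
    using insert comm assms by (intro opprod_commute) (auto simp: pairwise_def)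
  moreover have "opmul C (opprod C P I) (opprod C P I) = opprod C P I"
    using insert comm by blast
  ultimately show ?case
    using insert.prems(2) opmul.idem_mult[of C "P i" "opprod C P I"]
    by (simp only: opprod_insert[OF insert.hyps insert.prems(1)] insert_iff simp_thms)
qed

lemma opprod_union:
  assumes "finite C" and "finite A" and "finite B" and "A \<inter> B = {}" and "commuting C P (A \<union> B)"
  shows "opprod C P (A \<union> B) = opmul C (opprod C P A) (opprod C P B)"
  using assms(2-)
proof (induction A rule: finite_induct)
  case empty
  then show ?case using assms(1) by (simp add: opmul_opid_left supported_opprod)
next
  case (insert a A)
  have comm: "commuting C P (insert a A)" "commuting C P (A \<union> B)" "commuting C P (insert a (A \<union> B))"
    using insert.prems(3) by (auto intro: pairwise_subset)
  have "opprod C P (insert a A \<union> B) = opmul C (P a) (opprod C P (A \<union> B))"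
    using insert comm(3) by (simp add: opprod_insert)
  also have "\<dots> = opmul C (opmul C (P a) (opprod C P A)) (opprod C P B)"
    using insert comm(2) by (simp add: opmul_assoc)
  also have "\<dots> = opmul C (opprod C P (insert a A)) (opprod C P B)"
    using insert.hyps comm(1) by (simp add: opprod_insert)
  finally show ?case .
qed

section \<open>Integrals of operator-valued functions\<close>

definition op_adj :: "'x op \<Rightarrow> 'x op" where
  "op_adj A = (\<lambda>\<sigma> \<tau>. cnj (A \<tau> \<sigma>))"

definition op_lint :: "'g measure \<Rightarrow> ('g \<Rightarrow> 'x op) \<Rightarrow> 'x op" where
  "op_lint M F = (\<lambda>\<sigma> \<tau>. LINT g|M. F g \<sigma> \<tau>)"

definition bounded_family :: "'x cfg set \<Rightarrow> 'g measure \<Rightarrow> ('g \<Rightarrow> 'x op) \<Rightarrow> bool" where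
  "bounded_family C M F \<longleftrightarrow> (\<forall>\<sigma> \<tau>. (\<lambda>g. F g \<sigma> \<tau>) \<in> borel_measurable M) \<and>
     (\<exists>B. \<forall>g\<in>space M. \<forall>\<sigma>\<in>C. \<forall>\<tau>\<in>C. norm (F g \<sigma> \<tau>) \<le> B)"

lemma integrable_bounded_family:
  assumes "finite_measure M" and "bounded_family C M F" and "\<sigma> \<in> C" and "\<tau> \<in> C"
  shows "integrable M (\<lambda>g. F g \<sigma> \<tau>)"
proof -
  obtain B where "\<forall>g\<in>space M. \<forall>\<sigma>\<in>C. \<forall>\<tau>\<in>C. norm (F g \<sigma> \<tau>) \<le> B"
    using assms(2) unfolding bounded_family_def by blast
  with assms show ?thesis
    unfolding bounded_family_def
    by (intro finite_measure.integrable_const_bound[where B=B]) (auto intro!: AE_I2)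
qed

lemma bounded_family_const:
  assumes "finite C"
  shows "bounded_family C M (\<lambda>g. X)"
proof -
  have "norm (X \<sigma> \<tau>) \<le> (\<Sum>p\<in>C \<times> C. norm (X (fst p) (snd p)))" if "\<sigma> \<in> C" "\<tau> \<in> C" for \<sigma> \<tau>
    using member_le_sum[of "(\<sigma>, \<tau>)" "C \<times> C" "\<lambda>p. norm (X (fst p) (snd p))"] that assms by simp
  then show ?thesis
    unfolding bounded_family_def by auto
qed

lemma bounded_family_opmul:
  assumes F: "bounded_family C M F" and H: "bounded_family C M H"
  shows "bounded_family C M (\<lambda>g. opmul C (F g) (H g))"
proof -
  have [measurable]: "(\<lambda>g. F g \<sigma> \<tau>) \<in> borel_measurable M" "(\<lambda>g. H g \<sigma> \<tau>) \<in> borel_measurable M" for \<sigma> \<tau>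
    using F H unfolding bounded_family_def by blast+
  obtain B1 where B1: "\<forall>g\<in>space M. \<forall>\<sigma>\<in>C. \<forall>\<tau>\<in>C. norm (F g \<sigma> \<tau>) \<le> B1"
    using F unfolding bounded_family_def by blast
  obtain B2 where B2: "\<forall>g\<in>space M. \<forall>\<sigma>\<in>C. \<forall>\<tau>\<in>C. norm (H g \<sigma> \<tau>) \<le> B2"
    using H unfolding bounded_family_def by blast
  have "norm (opmul C (F g) (H g) \<sigma> \<tau>) \<le> real (card C) * (B1 * B2)"
    if "g \<in> space M" "\<sigma> \<in> C" "\<tau> \<in> C" for g \<sigma> \<tau>
  proof -
    have "norm (opmul C (F g) (H g) \<sigma> \<tau>) \<le> (\<Sum>\<rho>\<in>C. norm (F g \<sigma> \<rho>) * norm (H g \<rho> \<tau>))"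
      using that norm_sum[of "\<lambda>\<rho>. F g \<sigma> \<rho> * H g \<rho> \<tau>" C] by (simp add: opmul_def norm_mult)
    also have "\<dots> \<le> (\<Sum>\<rho>\<in>C. B1 * B2)"
      using that B1 B2 by (intro sum_mono mult_mono') (simp_all add: norm_ge_zero)
    finally show ?thesis by simp
  qed
  moreover have "(\<lambda>g. opmul C (F g) (H g) \<sigma> \<tau>) \<in> borel_measurable M" for \<sigma> \<tau>
    unfolding opmul_def by measurable
  ultimately show ?thesis
    unfolding bounded_family_def by blast
qed

lemma bounded_family_op_adj:
  assumes "bounded_family C M F"
  shows "bounded_family C M (\<lambda>g. op_adj (F g))"
proof -
  obtain B where "\<forall>g\<in>space M. \<forall>\<sigma>\<in>C. \<forall>\<tau>\<in>C. norm (F g \<sigma> \<tau>) \<le> B"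
    using assms unfolding bounded_family_def by blast
  moreover have "(\<lambda>g. cnj (F g \<tau> \<sigma>)) \<in> borel_measurable M" for \<sigma> \<tau>
    using assms unfolding bounded_family_def
    by (intro borel_measurable_continuous_on[OF continuous_on_cnj[OF continuous_on_id]]) blast
  ultimately show ?thesis
    unfolding bounded_family_def op_adj_def complex_mod_cnj by blast
qed

lemma bounded_family_comp:
  assumes F: "bounded_family C M F" and \<phi>: "\<phi> \<in> M \<rightarrow>\<^sub>M M"
  shows "bounded_family C M (\<lambda>g. F (\<phi> g))"
proof -
  obtain B where "\<forall>g\<in>space M. \<forall>\<sigma>\<in>C. \<forall>\<tau>\<in>C. norm (F g \<sigma> \<tau>) \<le> B"
    using F unfolding bounded_family_def by blast
  then have "\<forall>g\<in>space M. \<forall>\<sigma>\<in>C. \<forall>\<tau>\<in>C. norm (F (\<phi> g) \<sigma> \<tau>) \<le> B"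
    using measurable_space[OF \<phi>] by blast
  moreover have "(\<lambda>g. F (\<phi> g) \<sigma> \<tau>) \<in> borel_measurable M" for \<sigma> \<tau>
    using F measurable_compose[OF \<phi>, of "\<lambda>g. F g \<sigma> \<tau>"] unfolding bounded_family_def by blast
  ultimately show ?thesis
    unfolding bounded_family_def by blast
qed

lemma opmul_op_lint_left:
  assumes "finite_measure M" and "bounded_family C M F"
  shows "opmul C (op_lint M F) B = op_lint M (\<lambda>g. opmul C (F g) B)"
proof (intro ext)
  fix \<sigma> \<tau>
  have "(\<Sum>\<rho>\<in>C. (LINT g|M. F g \<sigma> \<rho>) * B \<rho> \<tau>) = (LINT g|M. (\<Sum>\<rho>\<in>C. F g \<sigma> \<rho> * B \<rho> \<tau>))"
    if "\<sigma> \<in> C" "\<tau> \<in> C"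
    using integrable_bounded_family[OF assms] that
    by (simp add: Bochner_Integration.integral_sum)
  then show "opmul C (op_lint M F) B \<sigma> \<tau> = op_lint M (\<lambda>g. opmul C (F g) B) \<sigma> \<tau>"
    by (auto simp: opmul_def op_lint_def)
qed

lemma opmul_op_lint_right:
  assumes "finite_measure M" and "bounded_family C M F"
  shows "opmul C B (op_lint M F) = op_lint M (\<lambda>g. opmul C B (F g))"
proof (intro ext)
  fix \<sigma> \<tau>
  have "(\<Sum>\<rho>\<in>C. B \<sigma> \<rho> * (LINT g|M. F g \<rho> \<tau>)) = (LINT g|M. (\<Sum>\<rho>\<in>C. B \<sigma> \<rho> * F g \<rho> \<tau>))"
    if "\<sigma> \<in> C" "\<tau> \<in> C"
    using integrable_bounded_family[OF assms] that
    by (simp add: Bochner_Integration.integral_sum)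
  then show "opmul C B (op_lint M F) \<sigma> \<tau> = op_lint M (\<lambda>g. opmul C B (F g)) \<sigma> \<tau>"
    by (auto simp: opmul_def op_lint_def)
qed

lemma op_lint_cong: "(\<And>g. g \<in> space M \<Longrightarrow> F g = H g) \<Longrightarrow> op_lint M F = op_lint M H"
  unfolding op_lint_def by (auto intro!: ext Bochner_Integration.integral_cong)

lemma op_lint_const: "prob_space M \<Longrightarrow> op_lint M (\<lambda>g. X) = X"
  unfolding op_lint_def by (simp add: prob_space.prob_space)

lemma op_lint_distr:
  assumes F: "bounded_family C M F" and \<phi>: "\<phi> \<in> M \<rightarrow>\<^sub>M M" and inv: "distr M M \<phi> = M"
  shows "op_lint M (\<lambda>g. F (\<phi> g)) = op_lint M F"
proof (intro ext)
  fix \<sigma> \<tau>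
  have "(\<lambda>g. F g \<sigma> \<tau>) \<in> borel_measurable M"
    using F unfolding bounded_family_def by blast
  from integral_distr[OF \<phi> this] show "op_lint M (\<lambda>g. F (\<phi> g)) \<sigma> \<tau> = op_lint M F \<sigma> \<tau>"
    unfolding op_lint_def inv by simp
qed

section \<open>Haar averages of a unitary representation\<close>

locale haar_average =
  fixes C :: "'x cfg set" and G :: "('g, 'b) monoid_scheme" and M :: "'g measure"
    and A :: "'g \<Rightarrow> 'x op"
  assumes finite_C: "finite C" and group: "group G"
    and prob: "prob_space M" and space_M: "space M = carrier G"
    and left_invariant: "\<forall>g\<in>carrier G. (\<lambda>h. g \<otimes>\<^bsub>G\<^esub> h) \<in> M \<rightarrow>\<^sub>M M \<and> distr M M (\<lambda>h. g \<otimes>\<^bsub>G\<^esub> h) = M"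
    and right_invariant: "\<forall>g\<in>carrier G. (\<lambda>h. h \<otimes>\<^bsub>G\<^esub> g) \<in> M \<rightarrow>\<^sub>M M \<and> distr M M (\<lambda>h. h \<otimes>\<^bsub>G\<^esub> g) = M"
    and hom: "\<forall>g\<in>carrier G. \<forall>h\<in>carrier G. opmul C (A g) (A h) = A (g \<otimes>\<^bsub>G\<^esub> h)"
    and inv: "\<forall>g\<in>carrier G. A (inv\<^bsub>G\<^esub> g) = op_adj (A g)"
    and bounded: "bounded_family C M A"
begin

abbreviation mult (infixl \<open>\<cdot>\<close> 70) where "X \<cdot> Y \<equiv> opmul C X Y"

definition average :: "'x op" where
  "average = op_lint M A"

definition twirl :: "'x op \<Rightarrow> 'x op" where
  "twirl X = op_lint M (\<lambda>g. A g \<cdot> X \<cdot> op_adj (A g))"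

lemma finite_measure_M: "finite_measure M"
  using prob by (simp add: prob_space_def)

lemma bounded_family_conj: "bounded_family C M (\<lambda>g. A g \<cdot> X \<cdot> op_adj (A g))"
  by (intro bounded_family_opmul finite_C bounded_family_op_adj bounded_family_const bounded)

lemma op_adj_eq_inv: "g \<in> carrier G \<Longrightarrow> op_adj (A g) = A (inv\<^bsub>G\<^esub> g)"
  using inv by simp

lemma average_mult_rep: "g \<in> carrier G \<Longrightarrow> average \<cdot> A g = average"
proof -
  assume g: "g \<in> carrier G"
  have "average \<cdot> A g = op_lint M (\<lambda>h. A (h \<otimes>\<^bsub>G\<^esub> g))"
    unfolding average_def opmul_op_lint_left[OF finite_measure_M bounded]
    by (rule op_lint_cong) (use hom g space_M in auto)
  also have "\<dots> = average"
    unfolding average_def using right_invariant g by (intro op_lint_distr[OF bounded]) auto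
  finally show ?thesis .
qed

lemma rep_mult_average: "g \<in> carrier G \<Longrightarrow> A g \<cdot> average = average"
proof -
  assume g: "g \<in> carrier G"
  have "A g \<cdot> average = op_lint M (\<lambda>h. A (g \<otimes>\<^bsub>G\<^esub> h))"
    unfolding average_def opmul_op_lint_right[OF finite_measure_M bounded]
    by (rule op_lint_cong) (use hom g space_M in auto)
  also have "\<dots> = average"
    unfolding average_def using left_invariant g by (intro op_lint_distr[OF bounded]) auto
  finally show ?thesis .
qed

lemma average_idem: "average \<cdot> average = average"
proof -
  have "average \<cdot> average = op_lint M (\<lambda>h. A h \<cdot> average)"
    unfolding average_def by (rule opmul_op_lint_left[OF finite_measure_M bounded])
  also have "\<dots> = op_lint M (\<lambda>h. average)"
    by (rule op_lint_cong) (use rep_mult_average space_M in auto)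
  finally show ?thesis
    by (simp add: op_lint_const[OF prob])
qed

lemma average_commute:
  assumes "\<forall>g\<in>carrier G. A g \<cdot> B = B \<cdot> A g"
  shows "average \<cdot> B = B \<cdot> average"
proof -
  have "average \<cdot> B = op_lint M (\<lambda>h. A h \<cdot> B)"
    unfolding average_def by (rule opmul_op_lint_left[OF finite_measure_M bounded])
  also have "\<dots> = op_lint M (\<lambda>h. B \<cdot> A h)"
    by (rule op_lint_cong) (use assms space_M in auto)
  also have "\<dots> = B \<cdot> average"
    unfolding average_def by (rule opmul_op_lint_right[OF finite_measure_M bounded, symmetric])
  finally show ?thesis .
qed

lemma twirl_commute_rep:
  assumes h: "h \<in> carrier G"
  shows "A h \<cdot> twirl X = twirl X \<cdot> A h"
proof -
  interpret G: group G by (rule group)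
  txt \<open>Moving A h through the integrand amounts to the substitution g \<mapsto> h g, which the
    Haar measure absorbs.\<close>
  have step: "A h \<cdot> (A g \<cdot> X \<cdot> op_adj (A g)) = A (h \<otimes>\<^bsub>G\<^esub> g) \<cdot> X \<cdot> op_adj (A (h \<otimes>\<^bsub>G\<^esub> g)) \<cdot> A h"
    if g: "g \<in> carrier G" for g
  proof -
    have "inv\<^bsub>G\<^esub> (h \<otimes>\<^bsub>G\<^esub> g) \<otimes>\<^bsub>G\<^esub> h = inv\<^bsub>G\<^esub> g"
      using g h by (simp add: G.inv_mult_group G.m_assoc)
    then have inv_g: "A (inv\<^bsub>G\<^esub> (h \<otimes>\<^bsub>G\<^esub> g)) \<cdot> A h = A (inv\<^bsub>G\<^esub> g)"
      using hom g h by (metis G.inv_closed G.m_closed)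
    have hg: "A h \<cdot> A g = A (h \<otimes>\<^bsub>G\<^esub> g)"
      using hom g h by blast
    have "A h \<cdot> (A g \<cdot> X \<cdot> op_adj (A g)) = A h \<cdot> A g \<cdot> X \<cdot> A (inv\<^bsub>G\<^esub> g)"
      using g by (simp only: op_adj_eq_inv opmul_assoc)
    also have "\<dots> = A (h \<otimes>\<^bsub>G\<^esub> g) \<cdot> X \<cdot> (A (inv\<^bsub>G\<^esub> (h \<otimes>\<^bsub>G\<^esub> g)) \<cdot> A h)"
      by (simp only: hg inv_g)
    also have "\<dots> = A (h \<otimes>\<^bsub>G\<^esub> g) \<cdot> X \<cdot> op_adj (A (h \<otimes>\<^bsub>G\<^esub> g)) \<cdot> A h"
      using g h by (simp only: op_adj_eq_inv G.m_closed opmul_assoc)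
    finally show ?thesis .
  qed
  have "A h \<cdot> twirl X = op_lint M (\<lambda>g. A (h \<otimes>\<^bsub>G\<^esub> g) \<cdot> X \<cdot> op_adj (A (h \<otimes>\<^bsub>G\<^esub> g)) \<cdot> A h)"
    unfolding twirl_def opmul_op_lint_right[OF finite_measure_M bounded_family_conj]
    by (rule op_lint_cong) (simp add: step space_M)
  also have "\<dots> = op_lint M (\<lambda>g. A (h \<otimes>\<^bsub>G\<^esub> g) \<cdot> X \<cdot> op_adj (A (h \<otimes>\<^bsub>G\<^esub> g))) \<cdot> A h"
    using left_invariant h
    by (intro opmul_op_lint_left[OF finite_measure_M, symmetric] bounded_family_comp[OF bounded_family_conj]) auto
  also have "\<dots> = twirl X \<cdot> A h"
    unfolding twirl_def using left_invariant h by (subst op_lint_distr[OF bounded_family_conj]) auto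
  finally show ?thesis .
qed

lemma average_twirl_commute: "average \<cdot> twirl X = twirl X \<cdot> average"
  by (intro average_commute ballI twirl_commute_rep)

lemma average_twirl_average: "average \<cdot> twirl X \<cdot> average = average \<cdot> X \<cdot> average"
proof -
  have "average \<cdot> twirl X \<cdot> average = op_lint M (\<lambda>g. average \<cdot> (A g \<cdot> X \<cdot> op_adj (A g)) \<cdot> average)"
    unfolding twirl_def opmul_op_lint_right[OF finite_measure_M bounded_family_conj]
    by (intro opmul_op_lint_left[OF finite_measure_M] bounded_family_opmul finite_C bounded_family_const bounded_family_conj)
  also have "\<dots> = op_lint M (\<lambda>g. average \<cdot> X \<cdot> average)"
  proof (rule op_lint_cong)
    fix g assume "g \<in> space M"
    then have g: "g \<in> carrier G" "inv\<^bsub>G\<^esub> g \<in> carrier G"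
      using group by (simp_all add: space_M group.inv_closed)
    have "average \<cdot> (A g \<cdot> X \<cdot> op_adj (A g)) \<cdot> average = average \<cdot> A g \<cdot> X \<cdot> (A (inv\<^bsub>G\<^esub> g) \<cdot> average)"
      using g by (simp only: op_adj_eq_inv opmul_assoc)
    then show "average \<cdot> (A g \<cdot> X \<cdot> op_adj (A g)) \<cdot> average = average \<cdot> X \<cdot> average"
      using g by (simp only: average_mult_rep rep_mult_average)
  qed
  also have "\<dots> = average \<cdot> X \<cdot> average"
    by (rule op_lint_const[OF prob])
  finally show ?thesis .
qed

lemma twirl_commute:
  assumes rep: "\<forall>g\<in>carrier G. A g \<cdot> B = B \<cdot> A g" and X: "X \<cdot> B = B \<cdot> X"
  shows "B \<cdot> twirl X = twirl X \<cdot> B"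
proof -
  have "B \<cdot> twirl X = op_lint M (\<lambda>g. B \<cdot> (A g \<cdot> X \<cdot> op_adj (A g)))"
    unfolding twirl_def by (rule opmul_op_lint_right[OF finite_measure_M bounded_family_conj])
  also have "\<dots> = op_lint M (\<lambda>g. A g \<cdot> X \<cdot> op_adj (A g) \<cdot> B)"
  proof (rule op_lint_cong)
    fix g assume "g \<in> space M"
    then have g: "g \<in> carrier G" "inv\<^bsub>G\<^esub> g \<in> carrier G"
      using group by (simp_all add: space_M group.inv_closed)
    have "B \<cdot> (A g \<cdot> X \<cdot> A (inv\<^bsub>G\<^esub> g)) = A g \<cdot> X \<cdot> A (inv\<^bsub>G\<^esub> g) \<cdot> B"
      using rep g X by (metis opmul_assoc)
    then show "B \<cdot> (A g \<cdot> X \<cdot> op_adj (A g)) = A g \<cdot> X \<cdot> op_adj (A g) \<cdot> B"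
      using g by (simp only: op_adj_eq_inv)
  qed
  also have "\<dots> = twirl X \<cdot> B"
    unfolding twirl_def by (rule opmul_op_lint_left[OF finite_measure_M bounded_family_conj, symmetric])
  finally show ?thesis .
qed

end

section \<open>Unitary representations on a single site\<close>

text \<open>Site matrices are total functions; only their upper-left n \<times> n block is meaningful, so
  they are compared after truncation.\<close>

definition trunc_mat :: "nat \<Rightarrow> cmat \<Rightarrow> cmat" where
  "trunc_mat n A = (\<lambda>i j. if i < n \<and> j < n then A i j else 0)"

definition mult_mat :: "nat \<Rightarrow> cmat \<Rightarrow> cmat \<Rightarrow> cmat" where
  "mult_mat n A B = trunc_mat n (matmul n A B)"

definition adj_mat :: "cmat \<Rightarrow> cmat" where
  "adj_mat A = (\<lambda>i j. cnj (A j i))"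

lemma mult_mat_trunc_left [simp]: "mult_mat n (trunc_mat n A) B = mult_mat n A B"
  by (auto simp: mult_mat_def trunc_mat_def matmul_def intro!: ext sum.cong)

lemma mult_mat_trunc_right [simp]: "mult_mat n A (trunc_mat n B) = mult_mat n A B"
  by (auto simp: mult_mat_def trunc_mat_def matmul_def intro!: ext sum.cong)

lemma mult_mat_matmul_left [simp]: "mult_mat n (matmul n A B) D = mult_mat n (mult_mat n A B) D"
  by (metis mult_mat_trunc_left mult_mat_def)

lemma mult_mat_matmul_right [simp]: "mult_mat n D (matmul n A B) = mult_mat n D (mult_mat n A B)"
  by (metis mult_mat_trunc_right mult_mat_def)

lemma mult_mat_assoc: "mult_mat n (mult_mat n A B) D = mult_mat n A (mult_mat n B D)"
proof -
  have "matmul n (matmul n A B) D = matmul n A (matmul n B D)"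
    by (auto simp: matmul_def sum_distrib_left sum_distrib_right mult.assoc intro!: ext
        intro: sum.swap[THEN trans])
  then show ?thesis
    by (metis mult_mat_def mult_mat_matmul_left mult_mat_matmul_right)
qed

interpretation mult_mat: semigroup "mult_mat n" for n
  by unfold_locales (rule mult_mat_assoc)

lemma mult_mat_idm_left [simp]: "mult_mat n idm A = trunc_mat n A"
  by (auto simp: mult_mat_def trunc_mat_def matmul_def idm_def if_distrib[of "\<lambda>x. x * _"]
      cong: if_cong intro!: ext)

lemma mult_mat_idm_right [simp]: "mult_mat n A idm = trunc_mat n A"
  by (auto simp: mult_mat_def trunc_mat_def matmul_def idm_def if_distrib[of "\<lambda>x. _ * x"]
      cong: if_cong intro!: ext)

lemma adj_mult_mat: "adj_mat (mult_mat n A B) = mult_mat n (adj_mat B) (adj_mat A)"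
  by (auto simp: adj_mat_def mult_mat_def trunc_mat_def matmul_def mult.commute intro!: ext sum.cong)

lemma adj_trunc_mat: "adj_mat (trunc_mat n A) = trunc_mat n (adj_mat A)"
  by (auto simp: adj_mat_def trunc_mat_def intro!: ext)

lemma unitary_rep_iff:
  "unitary_rep G n \<rho> \<longleftrightarrow>
     (\<forall>g\<in>carrier G. mult_mat n (\<rho> g) (adj_mat (\<rho> g)) = trunc_mat n idm) \<and>
     (\<forall>g\<in>carrier G. \<forall>h\<in>carrier G. trunc_mat n (\<rho> (g \<otimes>\<^bsub>G\<^esub> h)) = mult_mat n (\<rho> g) (\<rho> h))"
  unfolding unitary_rep_def mult_mat_def trunc_mat_def matmul_def adj_mat_def fun_eq_iff
  by (auto simp: idm_def)

lemma unitary_rep_unitary: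
  "unitary_rep G n \<rho> \<Longrightarrow> g \<in> carrier G \<Longrightarrow> mult_mat n (\<rho> g) (adj_mat (\<rho> g)) = trunc_mat n idm"
  by (simp add: unitary_rep_iff)

lemma unitary_rep_mult:
  "unitary_rep G n \<rho> \<Longrightarrow> g \<in> carrier G \<Longrightarrow> h \<in> carrier G \<Longrightarrow>
    trunc_mat n (\<rho> (g \<otimes>\<^bsub>G\<^esub> h)) = mult_mat n (\<rho> g) (\<rho> h)"
  by (simp add: unitary_rep_iff)

text \<open>A unitary matrix has a right inverse, so the idempotent \<rho>(1) is the identity.\<close>

lemma unitary_rep_one:
  assumes "group G" and \<rho>: "unitary_rep G n \<rho>"
  shows "trunc_mat n (\<rho> \<one>\<^bsub>G\<^esub>) = trunc_mat n idm"
proof -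
  interpret G: group G by fact
  let ?U = "\<rho> \<one>\<^bsub>G\<^esub>"
  have unit: "mult_mat n ?U (adj_mat ?U) = trunc_mat n idm"
    by (rule unitary_rep_unitary[OF \<rho> G.one_closed])
  have idem: "trunc_mat n ?U = mult_mat n ?U ?U"
    using unitary_rep_mult[OF \<rho> G.one_closed G.one_closed] by simp
  have "trunc_mat n ?U = mult_mat n ?U (mult_mat n ?U (adj_mat ?U))"
    by (simp add: unit)
  also have "\<dots> = mult_mat n (mult_mat n ?U ?U) (adj_mat ?U)"
    by (simp only: mult_mat.assoc)
  also have "\<dots> = trunc_mat n idm"
    by (simp only: idem[symmetric] mult_mat_trunc_left unit)
  finally show ?thesis .
qed

lemma unitary_rep_inv:
  assumes G: "group G" and \<rho>: "unitary_rep G n \<rho>" and g: "g \<in> carrier G"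
  shows "trunc_mat n (\<rho> (inv\<^bsub>G\<^esub> g)) = trunc_mat n (adj_mat (\<rho> g))"
proof -
  interpret G: group G by fact
  have inv_g: "mult_mat n (\<rho> (inv\<^bsub>G\<^esub> g)) (\<rho> g) = trunc_mat n idm"
    using unitary_rep_mult[OF \<rho> G.inv_closed[OF g] g] unitary_rep_one[OF G \<rho>] g by simp
  have "trunc_mat n (\<rho> (inv\<^bsub>G\<^esub> g)) = mult_mat n (\<rho> (inv\<^bsub>G\<^esub> g)) (mult_mat n (\<rho> g) (adj_mat (\<rho> g)))"
    by (simp add: unitary_rep_unitary[OF \<rho> g])
  also have "\<dots> = trunc_mat n (adj_mat (\<rho> g))"
    by (simp only: mult_mat.assoc[symmetric] inv_g mult_mat_trunc_left mult_mat_idm_left)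
  finally show ?thesis .
qed

lemma unitary_rep_entry_bound:
  assumes \<rho>: "unitary_rep G n \<rho>" and g: "g \<in> carrier G" and "i < n" and "j < n"
  shows "norm (\<rho> g i j) \<le> 1"
proof -
  have "complex_of_real (\<Sum>k<n. (cmod (\<rho> g i k))\<^sup>2) = (\<Sum>k<n. \<rho> g i k * cnj (\<rho> g i k))"
    by (simp add: complex_norm_square[symmetric])
  also have "\<dots> = 1"
    using \<rho> g \<open>i < n\<close> unfolding unitary_rep_def by (simp add: idm_def)
  finally have "(\<Sum>k<n. (cmod (\<rho> g i k))\<^sup>2) = 1"
    using of_real_eq_1_iff by blast
  moreover have "(cmod (\<rho> g i j))\<^sup>2 \<le> (\<Sum>k<n. (cmod (\<rho> g i k))\<^sup>2)"
    using \<open>j < n\<close> by (intro member_le_sum) auto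
  ultimately show ?thesis
    by (simp add: power_le_one_iff)
qed

lemma unitary_rep_idm: "unitary_rep G n (\<lambda>g. idm)"
proof -
  have "adj_mat idm = idm"
    by (simp add: adj_mat_def idm_def fun_eq_iff)
  then show ?thesis
    unfolding unitary_rep_iff by simp
qed

lemma unitary_rep_matmul:
  assumes \<rho>1: "unitary_rep G n \<rho>1" and \<rho>2: "unitary_rep G n \<rho>2"
    and comm: "\<forall>g\<in>carrier G. \<forall>h\<in>carrier G. mult_mat n (\<rho>1 g) (\<rho>2 h) = mult_mat n (\<rho>2 h) (\<rho>1 g)"
  shows "unitary_rep G n (\<lambda>g. matmul n (\<rho>1 g) (\<rho>2 g))"
  unfolding unitary_rep_iff
proof (intro conjI ballI)
  fix g assume g: "g \<in> carrier G"
  have "mult_mat n (matmul n (\<rho>1 g) (\<rho>2 g)) (adj_mat (matmul n (\<rho>1 g) (\<rho>2 g)))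
      = mult_mat n (mult_mat n (\<rho>1 g) (\<rho>2 g)) (adj_mat (mult_mat n (\<rho>1 g) (\<rho>2 g)))"
    by (metis adj_trunc_mat mult_mat_def mult_mat_matmul_left mult_mat_trunc_right)
  also have "\<dots> = mult_mat n (\<rho>1 g) (mult_mat n (mult_mat n (\<rho>2 g) (adj_mat (\<rho>2 g))) (adj_mat (\<rho>1 g)))"
    by (simp only: adj_mult_mat mult_mat.assoc)
  also have "\<dots> = trunc_mat n idm"
    using unitary_rep_unitary[OF \<rho>1 g] unitary_rep_unitary[OF \<rho>2 g] by simp
  finally show "mult_mat n (matmul n (\<rho>1 g) (\<rho>2 g)) (adj_mat (matmul n (\<rho>1 g) (\<rho>2 g))) = trunc_mat n idm" .
next
  fix g h assume g: "g \<in> carrier G" and h: "h \<in> carrier G"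
  have "trunc_mat n (matmul n (\<rho>1 (g \<otimes>\<^bsub>G\<^esub> h)) (\<rho>2 (g \<otimes>\<^bsub>G\<^esub> h)))
     = mult_mat n (mult_mat n (\<rho>1 g) (\<rho>1 h)) (mult_mat n (\<rho>2 g) (\<rho>2 h))"
    by (metis mult_mat_def mult_mat_trunc_left mult_mat_trunc_right unitary_rep_mult[OF \<rho>1 g h]
        unitary_rep_mult[OF \<rho>2 g h])
  also have "\<dots> = mult_mat n (\<rho>1 g) (mult_mat n (mult_mat n (\<rho>2 g) (\<rho>1 h)) (\<rho>2 h))"
    using comm g h by (metis mult_mat.assoc)
  also have "\<dots> = mult_mat n (matmul n (\<rho>1 g) (\<rho>2 g)) (matmul n (\<rho>1 h) (\<rho>2 h))"
    by (simp only: mult_mat_matmul_left mult_mat_matmul_right mult_mat.assoc)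
  finally show "trunc_mat n (matmul n (\<rho>1 (g \<otimes>\<^bsub>G\<^esub> h)) (\<rho>2 (g \<otimes>\<^bsub>G\<^esub> h))) =
      mult_mat n (matmul n (\<rho>1 g) (\<rho>2 g)) (matmul n (\<rho>1 h) (\<rho>2 h))" .
qed

section \<open>Tensor products of site operators\<close>

lemma finite_cfgs: "finite S \<Longrightarrow> finite (cfgs d S)"
  unfolding cfgs_def by (intro finite_PiE) auto

lemma cfgs_less: "\<sigma> \<in> cfgs d S \<Longrightarrow> x \<in> S \<Longrightarrow> \<sigma> x < d x"
  unfolding cfgs_def by auto

lemma restrict_cfgs: "\<sigma> \<in> cfgs d S \<Longrightarrow> r \<subseteq> S \<Longrightarrow> restrict \<sigma> r \<in> cfgs d r"
  unfolding cfgs_def by auto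

lemma supported_prod_op [simp]: "supported (cfgs d S) (prod_op S d u)"
  by (simp add: supported_def prod_op_def)

lemma sum_cfgs_prod:
  assumes "finite T"
  shows "(\<Sum>b\<in>cfgs d T. \<Prod>x\<in>T. f x (b x)) = (\<Prod>x\<in>T. \<Sum>k<d x. (f x k :: complex))"
  unfolding cfgs_def by (rule prod_sum_PiE[symmetric]) (use assms in auto)

lemma prod_op_mult:
  assumes S: "finite S"
  shows "opmul (cfgs d S) (prod_op S d u) (prod_op S d w) = prod_op S d (\<lambda>x. matmul (d x) (u x) (w x))"
proof (intro ext)
  fix \<sigma> \<tau>
  show "opmul (cfgs d S) (prod_op S d u) (prod_op S d w) \<sigma> \<tau> = prod_op S d (\<lambda>x. matmul (d x) (u x) (w x)) \<sigma> \<tau>"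
  proof (cases "\<sigma> \<in> cfgs d S \<and> \<tau> \<in> cfgs d S")
    case True
    have "opmul (cfgs d S) (prod_op S d u) (prod_op S d w) \<sigma> \<tau>
        = (\<Sum>\<rho>\<in>cfgs d S. (\<Prod>x\<in>S. u x (\<sigma> x) (\<rho> x)) * (\<Prod>x\<in>S. w x (\<rho> x) (\<tau> x)))"
      using True by (auto simp: opmul_def prod_op_def intro!: sum.cong)
    also have "\<dots> = (\<Sum>\<rho>\<in>cfgs d S. \<Prod>x\<in>S. u x (\<sigma> x) (\<rho> x) * w x (\<rho> x) (\<tau> x))"
      by (simp add: prod.distrib)
    also have "\<dots> = (\<Prod>x\<in>S. \<Sum>k<d x. u x (\<sigma> x) k * w x k (\<tau> x))"
      by (rule sum_cfgs_prod[OF S])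
    also have "\<dots> = prod_op S d (\<lambda>x. matmul (d x) (u x) (w x)) \<sigma> \<tau>"
      using True by (simp add: prod_op_def matmul_def)
    finally show ?thesis .
  qed (auto simp: opmul_def prod_op_def)
qed

lemma prod_op_cong:
  assumes "\<forall>x\<in>S. trunc_mat (d x) (u x) = trunc_mat (d x) (w x)"
  shows "prod_op S d u = prod_op S d w"
proof (intro ext)
  fix \<sigma> \<tau>
  have "u x (\<sigma> x) (\<tau> x) = w x (\<sigma> x) (\<tau> x)" if "\<sigma> \<in> cfgs d S" "\<tau> \<in> cfgs d S" "x \<in> S" for x
  proof -
    have "trunc_mat (d x) (u x) (\<sigma> x) (\<tau> x) = trunc_mat (d x) (w x) (\<sigma> x) (\<tau> x)"
      using assms that by simp
    then show ?thesis
      using cfgs_less[OF that(1,3)] cfgs_less[OF that(2,3)] by (simp add: trunc_mat_def)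
  qed
  then show "prod_op S d u \<sigma> \<tau> = prod_op S d w \<sigma> \<tau>"
    by (auto simp: prod_op_def intro!: prod.cong)
qed

lemma prod_op_idm:
  assumes S: "finite S"
  shows "prod_op S d (\<lambda>x. idm) = opid (cfgs d S)"
proof (intro ext)
  fix \<sigma> \<tau>
  show "prod_op S d (\<lambda>x. idm) \<sigma> \<tau> = opid (cfgs d S) \<sigma> \<tau>"
  proof (cases "\<sigma> \<in> cfgs d S \<and> \<tau> \<in> cfgs d S")
    case True
    have "(\<forall>x\<in>S. \<sigma> x = \<tau> x) \<longleftrightarrow> \<sigma> = \<tau>"
      using True unfolding cfgs_def by (auto intro: PiE_ext[of \<sigma> S _ \<tau>])
    moreover have "(\<Prod>x\<in>S. idm (\<sigma> x) (\<tau> x)) = (if \<forall>x\<in>S. \<sigma> x = \<tau> x then 1 else 0)"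
      using S by (auto simp: idm_def prod_zero_iff)
    ultimately show ?thesis
      using True by (simp add: prod_op_def opid_def)
  qed (auto simp: prod_op_def opid_def)
qed

lemma op_adj_prod_op: "op_adj (prod_op S d u) = prod_op S d (\<lambda>x. adj_mat (u x))"
  by (auto simp: op_adj_def prod_op_def adj_mat_def cnj_prod intro!: ext)

lemma norm_prod_op_le_1:
  assumes "\<forall>x\<in>S. \<forall>i<d x. \<forall>j<d x. norm (u x i j) \<le> 1"
  shows "norm (prod_op S d u \<sigma> \<tau>) \<le> 1"
proof (cases "\<sigma> \<in> cfgs d S \<and> \<tau> \<in> cfgs d S")
  case True
  then have "(\<Prod>x\<in>S. norm (u x (\<sigma> x) (\<tau> x))) \<le> 1"
    using assms cfgs_less[of \<sigma> d S] cfgs_less[of \<tau> d S] by (intro prod_le_1) auto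
  then show ?thesis
    using True by (simp add: prod_op_def prod_norm)
qed (auto simp: prod_op_def)


section \<open>Operators localized in a region\<close>

definition region_op :: "('x \<Rightarrow> nat) \<Rightarrow> 'x set \<Rightarrow> 'x set \<Rightarrow> 'x op \<Rightarrow> 'x op \<Rightarrow> 'x op" where
  "region_op d S r Ob W = (\<lambda>\<sigma> \<tau>. if \<sigma> \<in> cfgs d S \<and> \<tau> \<in> cfgs d S
      then Ob (restrict \<sigma> r) (restrict \<tau> r) * W (restrict \<sigma> (S - r)) (restrict \<tau> (S - r)) else 0)"

lemma sub_alg_eq_region_op: "sub_alg d S r = range (\<lambda>Ob. region_op d S r Ob (opid (cfgs d (S - r))))"
proof -
  have "region_op d S r Ob (opid (cfgs d (S - r))) = (\<lambda>\<sigma> \<tau>. if \<sigma> \<in> cfgs d S \<and> \<tau> \<in> cfgs d S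
      then Ob (restrict \<sigma> r) (restrict \<tau> r) *
        (if restrict \<sigma> (S - r) = restrict \<tau> (S - r) then 1 else 0) else 0)" for Ob
    using restrict_cfgs[of _ d S "S - r"] by (auto simp: region_op_def opid_def intro!: ext)
  then show ?thesis
    unfolding sub_alg_def by auto
qed

lemma bij_betw_split_cfgs:
  assumes "r \<subseteq> S"
  shows "bij_betw (\<lambda>\<rho>. (restrict \<rho> r, restrict \<rho> (S - r))) (cfgs d S) (cfgs d r \<times> cfgs d (S - r))"
proof (rule bij_betwI[where g="\<lambda>p x. if x \<in> r then fst p x else snd p x"])
  show "(\<lambda>\<rho>. (restrict \<rho> r, restrict \<rho> (S - r))) \<in> cfgs d S \<rightarrow> cfgs d r \<times> cfgs d (S - r)"
    using assms by (auto simp: cfgs_def)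
  show "(\<lambda>p x. if x \<in> r then fst p x else snd p x) \<in> cfgs d r \<times> cfgs d (S - r) \<rightarrow> cfgs d S"
    using assms by (auto simp: cfgs_def PiE_def Pi_def extensional_def)
qed (auto simp: cfgs_def PiE_def extensional_def fun_eq_iff)

lemma region_op_mult:
  assumes S: "finite S" and r: "r \<subseteq> S"
  shows "opmul (cfgs d S) (region_op d S r Ob1 W1) (region_op d S r Ob2 W2) =
    region_op d S r (opmul (cfgs d r) Ob1 Ob2) (opmul (cfgs d (S - r)) W1 W2)"
proof (intro ext)
  fix \<sigma> \<tau>
  show "opmul (cfgs d S) (region_op d S r Ob1 W1) (region_op d S r Ob2 W2) \<sigma> \<tau> =
    region_op d S r (opmul (cfgs d r) Ob1 Ob2) (opmul (cfgs d (S - r)) W1 W2) \<sigma> \<tau>"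
  proof (cases "\<sigma> \<in> cfgs d S \<and> \<tau> \<in> cfgs d S")
    case True
    define f where "f = (\<lambda>(a, b). Ob1 (restrict \<sigma> r) a * Ob2 a (restrict \<tau> r) *
        (W1 (restrict \<sigma> (S - r)) b * W2 b (restrict \<tau> (S - r))))"
    have "opmul (cfgs d S) (region_op d S r Ob1 W1) (region_op d S r Ob2 W2) \<sigma> \<tau>
        = (\<Sum>\<rho>\<in>cfgs d S. f (restrict \<rho> r, restrict \<rho> (S - r)))"
      using True by (auto simp: opmul_def region_op_def f_def mult_ac intro!: sum.cong)
    also have "\<dots> = (\<Sum>p\<in>cfgs d r \<times> cfgs d (S - r). f p)"
      by (rule sum.reindex_bij_betw[OF bij_betw_split_cfgs[OF r]])
    also have "\<dots> = (\<Sum>a\<in>cfgs d r. Ob1 (restrict \<sigma> r) a * Ob2 a (restrict \<tau> r)) *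
        (\<Sum>b\<in>cfgs d (S - r). W1 (restrict \<sigma> (S - r)) b * W2 b (restrict \<tau> (S - r)))"
      by (simp add: f_def sum.cartesian_product[symmetric] sum_product)
    also have "\<dots> = region_op d S r (opmul (cfgs d r) Ob1 Ob2) (opmul (cfgs d (S - r)) W1 W2) \<sigma> \<tau>"
      using True r restrict_cfgs[of \<sigma> d S] restrict_cfgs[of \<tau> d S]
      by (simp add: region_op_def opmul_def)
    finally show ?thesis .
  qed (auto simp: opmul_def region_op_def)
qed

lemma prod_op_eq_region_op:
  assumes S: "finite S" and r: "r \<subseteq> S"
  shows "prod_op S d u = region_op d S r (prod_op r d u) (prod_op (S - r) d u)"
proof (intro ext)
  fix \<sigma> \<tau>
  have "(\<Prod>x\<in>S. u x (\<sigma> x) (\<tau> x)) = (\<Prod>x\<in>r. u x (\<sigma> x) (\<tau> x)) * (\<Prod>x\<in>S - r. u x (\<sigma> x) (\<tau> x))"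
    using S r by (metis Diff_partition Diff_disjoint finite_Diff finite_subset prod.union_disjoint)
  then show "prod_op S d u \<sigma> \<tau> = region_op d S r (prod_op r d u) (prod_op (S - r) d u) \<sigma> \<tau>"
    using r restrict_cfgs[of \<sigma> d S] restrict_cfgs[of \<tau> d S]
    by (auto simp: prod_op_def region_op_def)
qed

lemma sub_alg_sandwich:
  assumes S: "finite S" and r: "r \<subseteq> S" and X: "X \<in> sub_alg d S r"
    and unit: "\<forall>x\<in>S - r. trunc_mat (d x) (matmul (d x) (u x) (w x)) = trunc_mat (d x) idm"
  shows "opmul (cfgs d S) (opmul (cfgs d S) (prod_op S d u) X) (prod_op S d w) \<in> sub_alg d S r"
proof -
  let ?T = "S - r"
  obtain Ob where X_eq: "X = region_op d S r Ob (opid (cfgs d ?T))"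
    using X unfolding sub_alg_eq_region_op by blast
  have "opmul (cfgs d ?T) (opmul (cfgs d ?T) (prod_op ?T d u) (opid (cfgs d ?T))) (prod_op ?T d w)
      = prod_op ?T d (\<lambda>x. matmul (d x) (u x) (w x))"
    using S by (simp add: opmul_opid_right finite_cfgs prod_op_mult)
  also have "\<dots> = prod_op ?T d (\<lambda>x. idm)"
    by (rule prod_op_cong) (use unit in simp)
  also have "\<dots> = opid (cfgs d ?T)"
    using S by (simp add: prod_op_idm)
  finally have env: "opmul (cfgs d ?T) (opmul (cfgs d ?T) (prod_op ?T d u) (opid (cfgs d ?T))) (prod_op ?T d w)
      = opid (cfgs d ?T)" .
  show ?thesis
    unfolding X_eq prod_op_eq_region_op[OF S r, of d u] prod_op_eq_region_op[OF S r, of d w]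
      region_op_mult[OF S r] env sub_alg_eq_region_op
    by (rule rangeI)
qed

lemma op_lint_sub_alg:
  assumes "\<forall>g\<in>space M. F g \<in> sub_alg d S r"
  shows "op_lint M F \<in> sub_alg d S r"
proof -
  have "\<forall>g\<in>space M. \<exists>Ob. F g = region_op d S r Ob (opid (cfgs d (S - r)))"
    using assms unfolding sub_alg_eq_region_op by blast
  then obtain Ob where Ob: "\<forall>g\<in>space M. F g = region_op d S r (Ob g) (opid (cfgs d (S - r)))"
    by (rule bchoice[THEN exE])
  have "op_lint M F = region_op d S r (\<lambda>a b. LINT g|M. Ob g a b) (opid (cfgs d (S - r)))"
    unfolding op_lint_def
  proof (intro ext)
    fix \<sigma> \<tau>
    have "(LINT g|M. F g \<sigma> \<tau>) = (LINT g|M. region_op d S r (Ob g) (opid (cfgs d (S - r))) \<sigma> \<tau>)"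
      using Ob by (intro Bochner_Integration.integral_cong) auto
    then show "(LINT g|M. F g \<sigma> \<tau>) = region_op d S r (\<lambda>a b. LINT g|M. Ob g a b) (opid (cfgs d (S - r))) \<sigma> \<tau>"
      by (auto simp: region_op_def)
  qed
  then show ?thesis
    unfolding sub_alg_eq_region_op by blast
qed

section \<open>Gauge transformations\<close>

locale gauge_setup =
  fixes \<Lambda> :: "('v, 'e) pre_digraph" and G :: "('g, 'b) monoid_scheme" and M :: "'g measure"
    and d :: "'v + 'e \<Rightarrow> nat" and U :: "'v \<Rightarrow> 'g \<Rightarrow> cmat"
    and L R :: "'e \<Rightarrow> 'g \<Rightarrow> cmat" and r :: "('v + 'e) set"
  assumes graph: "fin_digraph \<Lambda>"
    and grp: "group G"
    and haar_prob: "prob_space M" and haar_space: "space M = carrier G"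
    and haar_left: "\<forall>g\<in>carrier G. (\<lambda>h. g \<otimes>\<^bsub>G\<^esub> h) \<in> M \<rightarrow>\<^sub>M M \<and> distr M M (\<lambda>h. g \<otimes>\<^bsub>G\<^esub> h) = M"
    and haar_right: "\<forall>g\<in>carrier G. (\<lambda>h. h \<otimes>\<^bsub>G\<^esub> g) \<in> M \<rightarrow>\<^sub>M M \<and> distr M M (\<lambda>h. h \<otimes>\<^bsub>G\<^esub> g) = M"
    and U_rep: "\<forall>v\<in>verts \<Lambda>. unitary_rep G (d (Inl v)) (U v)"
    and L_rep: "\<forall>e\<in>arcs \<Lambda>. unitary_rep G (d (Inr e)) (L e)"
    and R_rep: "\<forall>e\<in>arcs \<Lambda>. unitary_rep G (d (Inr e)) (\<lambda>g. R e (inv\<^bsub>G\<^esub> g))"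
    and LR_comm: "\<forall>e\<in>arcs \<Lambda>. \<forall>g\<in>carrier G. \<forall>h\<in>carrier G. \<forall>i<d (Inr e). \<forall>j<d (Inr e).
                    matmul (d (Inr e)) (L e g) (R e h) i j = matmul (d (Inr e)) (R e h) (L e g) i j"
    and U_meas: "\<forall>v\<in>verts \<Lambda>. \<forall>i j. (\<lambda>g. U v g i j) \<in> borel_measurable M"
    and L_meas: "\<forall>e\<in>arcs \<Lambda>. \<forall>i j. (\<lambda>g. L e g i j) \<in> borel_measurable M"
    and R_meas: "\<forall>e\<in>arcs \<Lambda>. \<forall>i j. (\<lambda>g. R e (inv\<^bsub>G\<^esub> g) i j) \<in> borel_measurable M"
    and region: "r \<subseteq> sites \<Lambda>"
begin

abbreviation "C \<equiv> cfgs d (sites \<Lambda>)"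
abbreviation mult (infixl \<open>\<cdot>\<close> 70) where "X \<cdot> Y \<equiv> opmul C X Y"
abbreviation "site v g x \<equiv> gauge_site \<Lambda> G d U L R v g x"
abbreviation "A \<equiv> gauge_op \<Lambda> G d U L R"
abbreviation "P \<equiv> Pi_v \<Lambda> G M d U L R"
abbreviation "Pi_W \<equiv> Pi_set \<Lambda> G M d U L R"
abbreviation "Ar \<equiv> sub_alg d (sites \<Lambda>) r"

lemma finite_verts: "finite (verts \<Lambda>)"
  using graph by (rule fin_digraph.finite_verts)

lemma finite_sites: "finite (sites \<Lambda>)"
  using graph unfolding sites_def by (simp add: fin_digraph.finite_verts fin_digraph.finite_arcs)

lemma finite_C: "finite C"
  by (rule finite_cfgs[OF finite_sites])

lemma L_R_inv_commute:
  assumes "e \<in> arcs \<Lambda>" and "g \<in> carrier G" and "h \<in> carrier G"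
  shows "mult_mat (d (Inr e)) (L e g) (R e (inv\<^bsub>G\<^esub> h)) = mult_mat (d (Inr e)) (R e (inv\<^bsub>G\<^esub> h)) (L e g)"
  using LR_comm assms group.inv_closed[OF grp]
  unfolding mult_mat_def trunc_mat_def fun_eq_iff by auto

lemma unitary_rep_site:
  assumes v: "v \<in> verts \<Lambda>" and x: "x \<in> sites \<Lambda>"
  shows "unitary_rep G (d x) (\<lambda>g. site v g x)"
proof (cases x)
  case (Inl w)
  then show ?thesis
    using U_rep v by (cases "w = v") (simp_all add: gauge_site_def unitary_rep_idm)
next
  case (Inr e)
  have e: "e \<in> arcs \<Lambda>" using x Inr by (auto simp: sites_def)
  define n where "n = d (Inr e)"
  define \<rho>1 where "\<rho>1 = (\<lambda>g. if tail \<Lambda> e = v then L e g else idm)"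
  define \<rho>2 where "\<rho>2 = (\<lambda>g. if head \<Lambda> e = v then R e (inv\<^bsub>G\<^esub> g) else idm)"
  have "unitary_rep G n \<rho>1"
    unfolding \<rho>1_def n_def using L_rep e by (cases "tail \<Lambda> e = v") (simp_all add: unitary_rep_idm)
  moreover have "unitary_rep G n \<rho>2"
    unfolding \<rho>2_def n_def using R_rep e by (cases "head \<Lambda> e = v") (simp_all add: unitary_rep_idm)
  moreover have "\<forall>g\<in>carrier G. \<forall>h\<in>carrier G. mult_mat n (\<rho>1 g) (\<rho>2 h) = mult_mat n (\<rho>2 h) (\<rho>1 g)"
    unfolding \<rho>1_def \<rho>2_def n_def using L_R_inv_commute[OF e] by auto
  ultimately show ?thesis
    using Inr unitary_rep_matmul by (simp add: gauge_site_def \<rho>1_def \<rho>2_def n_def)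
qed

lemma site_commute:
  assumes "v \<noteq> w" and x: "x \<in> sites \<Lambda>" and g: "g \<in> carrier G" and h: "h \<in> carrier G"
  shows "mult_mat (d x) (site v g x) (site w h x) = mult_mat (d x) (site w h x) (site v g x)"
proof (cases x)
  case (Inl y)
  then show ?thesis using assms(1) by (auto simp: gauge_site_def)
next
  case (Inr e)
  have e: "e \<in> arcs \<Lambda>" using x Inr by (auto simp: sites_def)
  define n where "n = d (Inr e)"
  define L1 where "L1 = (if tail \<Lambda> e = v then L e g else idm)"
  define R1 where "R1 = (if head \<Lambda> e = v then R e (inv\<^bsub>G\<^esub> g) else idm)"
  define L2 where "L2 = (if tail \<Lambda> e = w then L e h else idm)"
  define R2 where "R2 = (if head \<Lambda> e = w then R e (inv\<^bsub>G\<^esub> h) else idm)"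
  have "mult_mat n L1 L2 = mult_mat n L2 L1" "mult_mat n R1 R2 = mult_mat n R2 R1"
    unfolding L1_def L2_def R1_def R2_def using assms(1) by auto
  moreover have "mult_mat n L1 R2 = mult_mat n R2 L1" "mult_mat n R1 L2 = mult_mat n L2 R1"
    unfolding L1_def L2_def R1_def R2_def n_def using L_R_inv_commute[OF e] g h by auto
  ultimately have "mult_mat n (mult_mat n L1 R1) (mult_mat n L2 R2) = mult_mat n (mult_mat n L2 R2) (mult_mat n L1 R1)"
    by (metis mult_mat.commute_mult)
  then show ?thesis
    using Inr by (simp add: gauge_site_def L1_def L2_def R1_def R2_def n_def)
qed

lemma site_measurable:
  assumes v: "v \<in> verts \<Lambda>" and x: "x \<in> sites \<Lambda>"
  shows "(\<lambda>g. site v g x i j) \<in> borel_measurable M"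
proof (cases x)
  case (Inl w)
  then show ?thesis
    using U_meas x by (cases "w = v") (auto simp: gauge_site_def sites_def)
next
  case (Inr e)
  have e: "e \<in> arcs \<Lambda>" using x Inr by (auto simp: sites_def)
  have [measurable]: "(\<lambda>g. L e g i j) \<in> borel_measurable M" "(\<lambda>g. R e (inv\<^bsub>G\<^esub> g) i j) \<in> borel_measurable M"
    for i j using L_meas R_meas e by blast+
  show ?thesis
    using Inr by (cases "tail \<Lambda> e = v"; cases "head \<Lambda> e = v") (simp_all add: gauge_site_def matmul_def)
qed

lemma bounded_gauge_op:
  assumes v: "v \<in> verts \<Lambda>"
  shows "bounded_family C M (A v)"
proof -
  have [measurable]: "\<And>x i j. x \<in> sites \<Lambda> \<Longrightarrow> (\<lambda>g. site v g x i j) \<in> borel_measurable M"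
    using site_measurable[OF v] by blast
  have "(\<lambda>g. A v g \<sigma> \<tau>) \<in> borel_measurable M" for \<sigma> \<tau>
    unfolding gauge_op_def prod_op_def by measurable
  moreover have "norm (A v g \<sigma> \<tau>) \<le> 1" if "g \<in> space M" for g \<sigma> \<tau>
    unfolding gauge_op_def
    by (rule norm_prod_op_le_1) (use unitary_rep_entry_bound[OF unitary_rep_site[OF v]] that haar_space in auto)
  ultimately show ?thesis
    unfolding bounded_family_def by blast
qed

lemma gauge_op_mult:
  assumes v: "v \<in> verts \<Lambda>" and g: "g \<in> carrier G" and h: "h \<in> carrier G"
  shows "A v g \<cdot> A v h = A v (g \<otimes>\<^bsub>G\<^esub> h)"
  unfolding gauge_op_def prod_op_mult[OF finite_sites]
  by (rule prod_op_cong) (use unitary_rep_mult[OF unitary_rep_site[OF v] g h] in \<open>simp add: mult_mat_def\<close>)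

lemma gauge_op_inv:
  assumes v: "v \<in> verts \<Lambda>" and g: "g \<in> carrier G"
  shows "A v (inv\<^bsub>G\<^esub> g) = op_adj (A v g)"
  unfolding gauge_op_def op_adj_prod_op
  by (rule prod_op_cong) (use unitary_rep_inv[OF grp unitary_rep_site[OF v] g] in auto)

lemma gauge_op_commute:
  assumes "v \<noteq> w" and g: "g \<in> carrier G" and h: "h \<in> carrier G"
  shows "A v g \<cdot> A w h = A w h \<cdot> A v g"
  unfolding gauge_op_def prod_op_mult[OF finite_sites]
  by (rule prod_op_cong) (use site_commute[OF assms(1) _ g h] in \<open>simp add: mult_mat_def\<close>)

lemma haar_average_gauge_op: "v \<in> verts \<Lambda> \<Longrightarrow> haar_average C G M (A v)"
  unfolding haar_average_def
  using finite_C grp haar_prob haar_space haar_left haar_right gauge_op_mult gauge_op_inv bounded_gauge_op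
  by blast

lemma Pi_v_eq_average: "v \<in> verts \<Lambda> \<Longrightarrow> P v = haar_average.average M (A v)"
  by (simp add: haar_average.average_def[OF haar_average_gauge_op] Pi_v_def op_lint_def)

lemma supported_Pi_v: "supported C (P v)"
  by (auto simp: supported_def Pi_v_def gauge_op_def prod_op_def)

lemma Pi_v_idem: "v \<in> verts \<Lambda> \<Longrightarrow> P v \<cdot> P v = P v"
  by (simp add: Pi_v_eq_average haar_average.average_idem[OF haar_average_gauge_op])

lemma Pi_v_commute_gauge_op:
  assumes "v \<in> verts \<Lambda>" and "w \<noteq> v" and "g \<in> carrier G"
  shows "P v \<cdot> A w g = A w g \<cdot> P v"
  using assms gauge_op_commute
  by (simp add: Pi_v_eq_average haar_average.average_commute[OF haar_average_gauge_op])

lemma Pi_v_commute: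
  assumes "v \<in> verts \<Lambda>" and "w \<in> verts \<Lambda>"
  shows "P v \<cdot> P w = P w \<cdot> P v"
proof (cases "v = w")
  case False
  then show ?thesis
    using assms Pi_v_commute_gauge_op
    by (simp add: Pi_v_eq_average[of v] haar_average.average_commute[OF haar_average_gauge_op])
qed simp

lemma commuting_Pi_v: "W \<subseteq> verts \<Lambda> \<Longrightarrow> commuting C P W"
  using Pi_v_commute by (auto simp: pairwise_def)

lemma site_inv_unitary:
  assumes w: "w \<in> verts \<Lambda>" and g: "g \<in> carrier G" and x: "x \<in> sites \<Lambda>"
  shows "trunc_mat (d x) (matmul (d x) (site w g x) (site w (inv\<^bsub>G\<^esub> g) x)) = trunc_mat (d x) idm"
proof -
  interpret G: group G by (rule grp)
  have "trunc_mat (d x) (matmul (d x) (site w g x) (site w (inv\<^bsub>G\<^esub> g) x))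
      = trunc_mat (d x) (site w \<one>\<^bsub>G\<^esub> x)"
    using unitary_rep_mult[OF unitary_rep_site[OF w x] g G.inv_closed[OF g]] g
    by (simp add: mult_mat_def)
  also have "\<dots> = trunc_mat (d x) idm"
    by (rule unitary_rep_one[OF grp unitary_rep_site[OF w x]])
  finally show ?thesis .
qed

lemma twirl_sub_alg:
  assumes w: "w \<in> verts \<Lambda>" and X: "X \<in> Ar"
  shows "haar_average.twirl C M (A w) X \<in> Ar"
  unfolding haar_average.twirl_def[OF haar_average_gauge_op[OF w]]
proof (rule op_lint_sub_alg, intro ballI)
  fix g assume "g \<in> space M"
  then have g: "g \<in> carrier G" by (simp add: haar_space)
  have "A w g \<cdot> X \<cdot> A w (inv\<^bsub>G\<^esub> g) \<in> Ar"
    unfolding gauge_op_def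
    by (rule sub_alg_sandwich[OF finite_sites region X]) (use site_inv_unitary[OF w g] in blast)
  then show "A w g \<cdot> X \<cdot> op_adj (A w g) \<in> Ar"
    by (simp add: gauge_op_inv[OF w g])
qed

lemma Pi_set_idem: "W \<subseteq> verts \<Lambda> \<Longrightarrow> Pi_W W \<cdot> Pi_W W = Pi_W W"
  unfolding Pi_set_def using finite_verts
  by (intro opprod_idem finite_C commuting_Pi_v)
    (auto intro: finite_subset simp: supported_Pi_v Pi_v_idem)

lemma Pi_set_commute:
  assumes "W \<subseteq> verts \<Lambda>" and "supported C B" and "\<forall>w\<in>W. B \<cdot> P w = P w \<cdot> B"
  shows "B \<cdot> Pi_W W = Pi_W W \<cdot> B"
  unfolding Pi_set_def using assms finite_verts
  by (intro opprod_commute finite_C commuting_Pi_v) (auto intro: finite_subset)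

lemma twirled_representative:
  assumes X: "X \<in> Ar"
  shows "finite W \<Longrightarrow> W \<subseteq> verts \<Lambda> \<Longrightarrow>
    \<exists>Y\<in>Ar. Pi_W W \<cdot> Y = Y \<cdot> Pi_W W \<and> Pi_W W \<cdot> Y \<cdot> Pi_W W = Pi_W W \<cdot> X \<cdot> Pi_W W"
proof (induction W rule: finite_induct)
  case empty
  have "supported C X"
    using X by (auto simp: sub_alg_def supported_def)
  then show ?case
    using X finite_C by (intro bexI[of _ X]) (simp_all add: Pi_set_def opmul_opid_left opmul_opid_right)
next
  case (insert w W)
  then have w: "w \<in> verts \<Lambda>" and W: "W \<subseteq> verts \<Lambda>" by auto
  interpret Hw: haar_average C G M "A w" by (rule haar_average_gauge_op[OF w])
  obtain Y' where Y': "Y' \<in> Ar" "Pi_W W \<cdot> Y' = Y' \<cdot> Pi_W W"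
    and compress: "Pi_W W \<cdot> Y' \<cdot> Pi_W W = Pi_W W \<cdot> X \<cdot> Pi_W W"
    using insert.IH W by blast
  define Y where "Y = Hw.twirl Y'"
  have split: "Pi_W (insert w W) = P w \<cdot> Pi_W W"
    unfolding Pi_set_def using insert.hyps commuting_Pi_v insert.prems
    by (intro opprod_insert) auto
  have "\<forall>g\<in>carrier G. A w g \<cdot> Pi_W W = Pi_W W \<cdot> A w g"
  proof
    fix g assume "g \<in> carrier G"
    then have "\<forall>w'\<in>W. A w g \<cdot> P w' = P w' \<cdot> A w g"
      using W insert.hyps(2) Pi_v_commute_gauge_op by (metis subsetD)
    then show "A w g \<cdot> Pi_W W = Pi_W W \<cdot> A w g"
      using W by (intro Pi_set_commute) (simp_all add: gauge_op_def)
  qed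
  then have "Pi_W W \<cdot> Y = Y \<cdot> Pi_W W"
    unfolding Y_def using Y'(2) by (intro Hw.twirl_commute) auto
  moreover have "P w \<cdot> Y = Y \<cdot> P w"
    unfolding Y_def Pi_v_eq_average[OF w] by (rule Hw.average_twirl_commute)
  ultimately have "Y \<cdot> Pi_W (insert w W) = Pi_W (insert w W) \<cdot> Y"
    unfolding split by (intro opmul.commute_mult) auto
  moreover have "Pi_W (insert w W) \<cdot> Y \<cdot> Pi_W (insert w W) = Pi_W (insert w W) \<cdot> X \<cdot> Pi_W (insert w W)"
    unfolding split
  proof (rule opmul.sandwich_mult[OF _ _ compress])
    show "Pi_W W \<cdot> P w = P w \<cdot> Pi_W W"
      by (rule Pi_set_commute[symmetric]) (use W w Pi_v_commute in \<open>auto simp: supported_Pi_v\<close>)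
    show "P w \<cdot> Y \<cdot> P w = P w \<cdot> Y' \<cdot> P w"
      unfolding Y_def Pi_v_eq_average[OF w] by (rule Hw.average_twirl_average)
  qed
  moreover have "Y \<in> Ar"
    unfolding Y_def using twirl_sub_alg[OF w Y'(1)] .
  ultimately show ?case
    by (intro bexI[of _ Y]) simp_all
qed

lemma supported_Pi_set: "W \<subseteq> verts \<Lambda> \<Longrightarrow> supported C (Pi_W W)"
  unfolding Pi_set_def using finite_verts
  by (intro supported_opprod commuting_Pi_v) (auto intro: finite_subset)

lemma Pi_set_commute_Pi_set:
  assumes "W1 \<subseteq> verts \<Lambda>" and "W2 \<subseteq> verts \<Lambda>"
  shows "Pi_W W1 \<cdot> Pi_W W2 = Pi_W W2 \<cdot> Pi_W W1"
proof (rule Pi_set_commute[OF assms(2) supported_Pi_set[OF assms(1)]], intro ballI)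
  fix w assume "w \<in> W2"
  with assms show "Pi_W W1 \<cdot> P w = P w \<cdot> Pi_W W1"
    by (intro Pi_set_commute[symmetric]) (auto simp: supported_Pi_v intro: Pi_v_commute)
qed

lemma Pi_set_split:
  assumes "W \<subseteq> verts \<Lambda>"
  shows "Pi_W (verts \<Lambda>) = Pi_W W \<cdot> Pi_W (verts \<Lambda> - W)"
proof -
  have "finite W" "finite (verts \<Lambda> - W)"
    using assms finite_verts by (auto intro: finite_subset)
  then have "opprod C P (W \<union> (verts \<Lambda> - W)) = opprod C P W \<cdot> opprod C P (verts \<Lambda> - W)"
    using assms by (intro opprod_union finite_C commuting_Pi_v) auto
  moreover have "W \<union> (verts \<Lambda> - W) = verts \<Lambda>"
    using assms by blast
  ultimately show ?thesis
    unfolding Pi_set_def by simp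
qed

theorem gauge_invariant_compression:
  assumes W: "W \<subseteq> verts \<Lambda>"
  shows "{Pi_W (verts \<Lambda>) \<cdot> X \<cdot> Pi_W (verts \<Lambda>) | X. X \<in> Ar} =
    {Oh \<cdot> Pi_W (verts \<Lambda>) | Oh. Oh \<in> {Pi_W W \<cdot> X \<cdot> Pi_W W | X. X \<in> Ar} \<and>
      Oh \<cdot> Pi_W (verts \<Lambda>) = Pi_W (verts \<Lambda>) \<cdot> Oh}"
  unfolding Pi_set_split[OF W]
proof (rule opmul.compression_eq_commuting_corner)
  show "Pi_W W \<cdot> Pi_W W = Pi_W W" and "Pi_W (verts \<Lambda> - W) \<cdot> Pi_W (verts \<Lambda> - W) = Pi_W (verts \<Lambda> - W)"
    using W by (simp_all add: Pi_set_idem)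
  show "Pi_W (verts \<Lambda> - W) \<cdot> Pi_W W = Pi_W W \<cdot> Pi_W (verts \<Lambda> - W)"
    using W by (simp add: Pi_set_commute_Pi_set)
  show "\<forall>X\<in>Ar. \<exists>Y\<in>Ar. Pi_W (verts \<Lambda> - W) \<cdot> Y = Y \<cdot> Pi_W (verts \<Lambda> - W) \<and>
      Pi_W (verts \<Lambda> - W) \<cdot> Y \<cdot> Pi_W (verts \<Lambda> - W) = Pi_W (verts \<Lambda> - W) \<cdot> X \<cdot> Pi_W (verts \<Lambda> - W)"
    using finite_verts by (intro ballI twirled_representative) auto
qed

end

theorem corollary4:
  fixes \<Lambda> :: "('v, 'e) pre_digraph" and G :: "('g, 'b) monoid_scheme" and M :: "'g measure"
    and d :: "'v + 'e \<Rightarrow> nat" and U :: "'v \<Rightarrow> 'g \<Rightarrow> cmat"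
    and L R :: "'e \<Rightarrow> 'g \<Rightarrow> cmat" and r :: "('v + 'e) set"
  assumes graph: "fin_digraph \<Lambda>"
    and grp: "group G"
    and haar_prob: "prob_space M" and haar_space: "space M = carrier G"
    and haar_left: "\<forall>g\<in>carrier G. (\<lambda>h. g \<otimes>\<^bsub>G\<^esub> h) \<in> M \<rightarrow>\<^sub>M M \<and> distr M M (\<lambda>h. g \<otimes>\<^bsub>G\<^esub> h) = M"
    and haar_right: "\<forall>g\<in>carrier G. (\<lambda>h. h \<otimes>\<^bsub>G\<^esub> g) \<in> M \<rightarrow>\<^sub>M M \<and> distr M M (\<lambda>h. h \<otimes>\<^bsub>G\<^esub> g) = M"
    and U_rep: "\<forall>v\<in>verts \<Lambda>. unitary_rep G (d (Inl v)) (U v)"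
    and L_rep: "\<forall>e\<in>arcs \<Lambda>. unitary_rep G (d (Inr e)) (L e)"
    and R_rep: "\<forall>e\<in>arcs \<Lambda>. unitary_rep G (d (Inr e)) (\<lambda>g. R e (inv\<^bsub>G\<^esub> g))"
    and LR_comm: "\<forall>e\<in>arcs \<Lambda>. \<forall>g\<in>carrier G. \<forall>h\<in>carrier G. \<forall>i<d (Inr e). \<forall>j<d (Inr e).
                    matmul (d (Inr e)) (L e g) (R e h) i j = matmul (d (Inr e)) (R e h) (L e g) i j"
    and U_meas: "\<forall>v\<in>verts \<Lambda>. \<forall>i j. (\<lambda>g. U v g i j) \<in> borel_measurable M"
    and L_meas: "\<forall>e\<in>arcs \<Lambda>. \<forall>i j. (\<lambda>g. L e g i j) \<in> borel_measurable M"
    and R_meas: "\<forall>e\<in>arcs \<Lambda>. \<forall>i j. (\<lambda>g. R e (inv\<^bsub>G\<^esub> g) i j) \<in> borel_measurable M"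
    and region: "r \<subseteq> sites \<Lambda>"
  shows
    "(let C = cfgs d (sites \<Lambda>);
          PiGI = Pi_set \<Lambda> G M d U L R (verts \<Lambda>);
          PiVr = Pi_set \<Lambda> G M d U L R (interior_verts \<Lambda> r);
          Ar = sub_alg d (sites \<Lambda>) r;
          hatAr = {opmul C (opmul C PiVr X) PiVr | X. X \<in> Ar}
      in {opmul C (opmul C PiGI X) PiGI | X. X \<in> Ar}
         = {opmul C Oh PiGI | Oh. Oh \<in> hatAr \<and> opmul C Oh PiGI = opmul C PiGI Oh})"
proof -
  interpret gauge_setup \<Lambda> G M d U L R r
    by (rule gauge_setup.intro) (rule assms)+
  have "interior_verts \<Lambda> r \<subseteq> verts \<Lambda>"
    by (auto simp: interior_verts_def)
  then show ?thesis
    unfolding Let_def by (rule gauge_invariant_compression)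
qed

end
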